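(* Let $n=p_1p_2\cdots p_l$ be an odd composite integer, where $p_1,\dots,p_l$ are distinct primes. Then $C_R(\mathbb{Z}_n)=\prod_{i=1}^{l} C_R(\mathbb{Z}_{p_i})$.
   Context: For a positive integer $m$, a reduced Weierstrass curve over $\mathbb{Z}_{m}$ is $y^2=x^3+ax+b$ with $(a,b)\in\mathbb{Z}_{m}^2$; it is nonsingular iff $\Delta=-16(4a^3+27b^2)$ is a unit in $\mathbb{Z}_{m}$. Two such curves with coefficients $(a,b)$ and $(\bar a,\bar b)$ are isomorphic iff there is $u\in\mathbb{Z}_{m}^*$ with $\bar a=u^{-4}a$ and $\bar b=u^{-6}b$ (i.e. related by the change of variables $(x,y)\mapsto(u^2x,u^3y)$). $C_R(\mathbb{Z}_m)$ denotes the number of isomorphism classes of nonsingular reduced curves over $\mathbb{Z}_m$. *)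

theory Defs
  imports "HOL-Number_Theory.Number_Theory"
begin

text \<open>Elements of Z_m are represented by integers in {0..<m}. A pair (a,b) gives the
reduced Weierstrass curve y^2 = x^3 + a x + b; it is nonsingular iff the discriminant
-16(4a^3+27b^2) is a unit of Z_m, i.e. coprime to m.\<close>

definition nonsing_curves :: "nat \<Rightarrow> (int \<times> int) set" where
  "nonsing_curves m = {(a, b). a \<in> {0..<int m} \<and> b \<in> {0..<int m} \<and>
      coprime (-16 * (4 * a ^ 3 + 27 * b ^ 2)) (int m)}"

text \<open>(a,b) and (a',b') are isomorphic iff there is a unit u of Z_m with
a' = u^(-4) a and b' = u^(-6) b, i.e. a = u^4 a' and b = u^6 b' in Z_m.\<close>

definition curve_iso :: "nat \<Rightarrow> ((int \<times> int) \<times> (int \<times> int)) set" where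
  "curve_iso m = {((a, b), (a', b')).
      (a, b) \<in> nonsing_curves m \<and> (a', b') \<in> nonsing_curves m \<and>
      (\<exists>u \<in> {0..<int m}. coprime u (int m) \<and>
         [u ^ 4 * a' = a] (mod int m) \<and> [u ^ 6 * b' = b] (mod int m))}"

definition C_R :: "nat \<Rightarrow> nat" where
  "C_R m = card (nonsing_curves m // curve_iso m)"

end

theory Submission
  imports Defs
begin

text \<open>Reducing the coefficients modulo r and modulo s maps the curves over Z_rs bijectively onto
pairs of curves over Z_r and Z_s (Chinese remainder theorem, applied to each coefficient; the
discriminant is a unit mod rs iff it is a unit mod r and mod s). Applying the Chinese remainder
theorem to the scaling unit u as well shows that two curves over Z_rs are isomorphic iff both
reductions are. Hence the isomorphism classes over Z_rs are the products of classes over Z_r and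
over Z_s, C_R is multiplicative, and a squarefree n is the coprime product of its prime factors.\<close>

lemma card_quotient_bij_betw:
  assumes bij: "bij_betw g A A'" and R: "R \<subseteq> A \<times> A" and R': "R' \<subseteq> A' \<times> A'"
    and rel_iff: "\<And>x y. x \<in> A \<Longrightarrow> y \<in> A \<Longrightarrow> (x, y) \<in> R \<longleftrightarrow> (g x, g y) \<in> R'"
  shows "card (A // R) = card (A' // R')"
proof -
  have inj: "inj_on g A" and im: "g ` A = A'" using bij by (auto simp: bij_betw_def)
  have class_image: "g ` (R `` {x}) = R' `` {g x}" if "x \<in> A" for x
  proof
    show "g ` (R `` {x}) \<subseteq> R' `` {g x}" using that R rel_iff by auto
    show "R' `` {g x} \<subseteq> g ` (R `` {x})"
    proof
      fix z assume "z \<in> R' `` {g x}"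
      then have "z \<in> A'" "(g x, z) \<in> R'" using R' by auto
      then obtain y where "y \<in> A" "z = g y" using im by auto
      then show "z \<in> g ` (R `` {x})" using rel_iff[OF that \<open>y \<in> A\<close>] \<open>(g x, z) \<in> R'\<close> by auto
    qed
  qed
  have "bij_betw (image g) (A // R) (A' // R')"
  proof (rule bij_betw_imageI)
    show "inj_on (image g) (A // R)"
    proof (rule inj_onI)
      fix X Y assume XY: "X \<in> A // R" "Y \<in> A // R" "g ` X = g ` Y"
      then have "X \<subseteq> A" "Y \<subseteq> A" using R by (auto simp: quotient_def)
      with XY(3) inj show "X = Y" by (simp add: inj_on_image_eq_iff)
    qed
    show "image g ` (A // R) = A' // R'"
      unfolding quotient_def using class_image im by auto
  qed
  then show ?thesis by (rule bij_betw_same_card)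
qed

lemma card_quotient_Times:
  assumes R1: "R1 \<subseteq> B \<times> B" "\<And>b. b \<in> B \<Longrightarrow> (b, b) \<in> R1"
    and R2: "R2 \<subseteq> C \<times> C" "\<And>c. c \<in> C \<Longrightarrow> (c, c) \<in> R2"
  shows "card ((B \<times> C) // {((b, c), (b', c')). (b, b') \<in> R1 \<and> (c, c') \<in> R2})
       = card (B // R1) * card (C // R2)"
proof -
  let ?R = "{((b, c), (b', c')). (b, b') \<in> R1 \<and> (c, c') \<in> R2}"
  have class_Times: "?R `` {(b, c)} = R1 `` {b} \<times> R2 `` {c}" for b c by auto
  have nonempty: "X \<noteq> {}" "Y \<noteq> {}" if "X \<in> B // R1" "Y \<in> C // R2" for X Y
    using that R1(2) R2(2) by (auto simp: quotient_def Image_def)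
  have "bij_betw (\<lambda>(X, Y). X \<times> Y) (B // R1 \<times> C // R2) ((B \<times> C) // ?R)"
  proof (rule bij_betw_imageI)
    show "inj_on (\<lambda>(X, Y). X \<times> Y) (B // R1 \<times> C // R2)"
      by (rule inj_onI) (use nonempty in \<open>auto simp: times_eq_iff\<close>)
    show "(\<lambda>(X, Y). X \<times> Y) ` (B // R1 \<times> C // R2) = (B \<times> C) // ?R"
      unfolding quotient_def by (auto simp only: class_Times) auto
  qed
  then have "card (B // R1 \<times> C // R2) = card ((B \<times> C) // ?R)" by (rule bij_betw_same_card)
  then show ?thesis by (simp add: card_cartesian_product)
qed

fun disc :: "int \<times> int \<Rightarrow> int" where
  "disc (a, b) = -16 * (4 * a ^ 3 + 27 * b ^ 2)"

lemma mem_nonsing_curves: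
  "(a, b) \<in> nonsing_curves m \<longleftrightarrow>
     a \<in> {0..<int m} \<and> b \<in> {0..<int m} \<and> coprime (disc (a, b)) (int m)"
  by (simp add: nonsing_curves_def)

lemma disc_cong:
  assumes "[a = a'] (mod m)" "[b = b'] (mod m)"
  shows "[disc (a, b) = disc (a', b')] (mod m)"
  using assms by (simp only: disc.simps) (intro cong_mult cong_add cong_pow cong_refl)

definition reduce_curve :: "nat \<Rightarrow> int \<times> int \<Rightarrow> int \<times> int" where
  "reduce_curve m = map_prod (\<lambda>x. x mod int m) (\<lambda>x. x mod int m)"

lemma reduce_curve_in_nonsing_curves:
  assumes "m > 0"
  shows "reduce_curve m (a, b) \<in> nonsing_curves m \<longleftrightarrow> coprime (disc (a, b)) (int m)"
proof -
  have "[disc (a mod int m, b mod int m) = disc (a, b)] (mod int m)"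
    by (rule disc_cong) simp_all
  then have "coprime (disc (a mod int m, b mod int m)) (int m) \<longleftrightarrow> coprime (disc (a, b)) (int m)"
    by (metis cong_imp_coprime cong_sym)
  then show ?thesis
    using assms by (simp add: reduce_curve_def mem_nonsing_curves del: disc.simps)
qed

lemma chinese_remainder_residue:
  fixes r s :: nat
  assumes "coprime r s" "r > 0" "s > 0"
  obtains x where "x \<in> {0..<int (r * s)}" "[x = u] (mod int r)" "[x = v] (mod int s)"
proof -
  obtain y where y: "[y = u] (mod int r)" "[y = v] (mod int s)"
    using binary_chinese_remainder_int assms by (metis coprime_int_iff)
  have "[y mod int (r * s) = y] (mod int r)" "[y mod int (r * s) = y] (mod int s)"
    by (simp_all add: cong_def mod_mod_cancel)
  with y have "[y mod int (r * s) = u] (mod int r)" "[y mod int (r * s) = v] (mod int s)"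
    using cong_trans by blast+
  moreover have "y mod int (r * s) \<in> {0..<int (r * s)}"
    using assms by simp
  ultimately show ?thesis using that by blast
qed

lemma mem_nonsing_curves_mult:
  "(a, b) \<in> nonsing_curves (r * s) \<longleftrightarrow> a \<in> {0..<int (r * s)} \<and> b \<in> {0..<int (r * s)} \<and>
     coprime (disc (a, b)) (int r) \<and> coprime (disc (a, b)) (int s)"
  by (simp only: mem_nonsing_curves of_nat_mult coprime_mult_right_iff)

lemma reduce_curve_bij_betw:
  assumes rs: "coprime r s" "r > 0" "s > 0"
  shows "bij_betw (\<lambda>p. (reduce_curve r p, reduce_curve s p))
           (nonsing_curves (r * s)) (nonsing_curves r \<times> nonsing_curves s)"
proof (rule bij_betw_imageI)
  show "inj_on (\<lambda>p. (reduce_curve r p, reduce_curve s p)) (nonsing_curves (r * s))"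
  proof (rule inj_onI, clarify)
    fix a b a' b'
    assume "(a, b) \<in> nonsing_curves (r * s)" "(a', b') \<in> nonsing_curves (r * s)"
      and "reduce_curve r (a, b) = reduce_curve r (a', b')"
      and "reduce_curve s (a, b) = reduce_curve s (a', b')"
    moreover from calculation have "[a = a'] (mod int r * int s)" "[b = b'] (mod int r * int s)"
      using rs(1) by (auto simp: reduce_curve_def cong_def[symmetric] intro: coprime_cong_mult)
    ultimately show "a = a' \<and> b = b'"
      by (auto simp: mem_nonsing_curves intro: cong_less_imp_eq_int)
  qed
  show "(\<lambda>p. (reduce_curve r p, reduce_curve s p)) ` nonsing_curves (r * s)
      = nonsing_curves r \<times> nonsing_curves s"
  proof (intro equalityI subsetI, clarsimp)
    fix a b assume "(a, b) \<in> nonsing_curves (r * s)"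
    then show "reduce_curve r (a, b) \<in> nonsing_curves r \<and> reduce_curve s (a, b) \<in> nonsing_curves s"
      using rs by (simp add: reduce_curve_in_nonsing_curves mem_nonsing_curves_mult)
  next
    fix z assume "z \<in> nonsing_curves r \<times> nonsing_curves s"
    then obtain a1 b1 a2 b2 where z: "z = ((a1, b1), (a2, b2))"
      and in1: "(a1, b1) \<in> nonsing_curves r" and in2: "(a2, b2) \<in> nonsing_curves s"
      by (metis mem_Times_iff prod.collapse)
    obtain a where a: "a \<in> {0..<int (r * s)}" "[a = a1] (mod int r)" "[a = a2] (mod int s)"
      using chinese_remainder_residue rs by blast
    obtain b where b: "b \<in> {0..<int (r * s)}" "[b = b1] (mod int r)" "[b = b2] (mod int s)"
      using chinese_remainder_residue rs by blast
    have "coprime (disc (a, b)) (int r)" "coprime (disc (a, b)) (int s)"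
      using in1 in2 disc_cong[OF a(2) b(2)] disc_cong[OF a(3) b(3)]
      by (metis cong_imp_coprime cong_sym mem_nonsing_curves)+
    then have "(a, b) \<in> nonsing_curves (r * s)"
      using a(1) b(1) by (simp add: mem_nonsing_curves_mult del: disc.simps)
    moreover have "(reduce_curve r (a, b), reduce_curve s (a, b)) = z"
      using a b in1 in2 by (auto simp: z reduce_curve_def mem_nonsing_curves cong_def)
    ultimately show "z \<in> (\<lambda>p. (reduce_curve r p, reduce_curve s p)) ` nonsing_curves (r * s)"
      by blast
  qed
qed

lemma cong_pow_mult_iff:
  fixes u v c d m :: int
  assumes "[u = v] (mod m)"
  shows "[u ^ k * c = d] (mod m) \<longleftrightarrow> [v ^ k * c = d] (mod m)"
proof -
  have "[u ^ k * c = v ^ k * c] (mod m)" using assms by (intro cong_mult cong_pow cong_refl)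
  then show ?thesis using cong_sym cong_trans by metis
qed

text \<open>Isomorphism of coefficient pairs with the unit u ranging over all integers instead of
{0..<m}, which makes it compatible with the Chinese remainder theorem.\<close>

fun twist_equiv :: "int \<Rightarrow> int \<times> int \<Rightarrow> int \<times> int \<Rightarrow> bool" where
  "twist_equiv m (a, b) (a', b') \<longleftrightarrow>
     (\<exists>u. coprime u m \<and> [u ^ 4 * a' = a] (mod m) \<and> [u ^ 6 * b' = b] (mod m))"

lemma curve_iso_iff_twist_equiv:
  assumes "m > 0"
  shows "(p, q) \<in> curve_iso m \<longleftrightarrow>
           p \<in> nonsing_curves m \<and> q \<in> nonsing_curves m \<and> twist_equiv (int m) p q"
proof -
  obtain a b a' b' where pq: "p = (a, b)" "q = (a', b')" by force
  have "\<exists>u \<in> {0..<int m}. coprime u (int m) \<and> [u ^ 4 * a' = a] (mod int m) \<and> [u ^ 6 * b' = b] (mod int m)"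
    if "coprime u (int m)" "[u ^ 4 * a' = a] (mod int m)" "[u ^ 6 * b' = b] (mod int m)" for u
  proof (intro bexI conjI)
    have u_mod: "[u mod int m = u] (mod int m)" by simp
    show "coprime (u mod int m) (int m)"
      using that(1) cong_imp_coprime[OF cong_sym[OF u_mod]] by blast
    show "[(u mod int m) ^ 4 * a' = a] (mod int m)" "[(u mod int m) ^ 6 * b' = b] (mod int m)"
      using that(2,3) cong_pow_mult_iff[OF u_mod] by blast+
    show "u mod int m \<in> {0..<int m}" using assms by simp
  qed
  then show ?thesis by (auto simp: curve_iso_def pq)
qed

lemma twist_equiv_mod:
  "twist_equiv m (a mod m, b mod m) (a' mod m, b' mod m) \<longleftrightarrow> twist_equiv m (a, b) (a', b')"
  by (simp add: cong_def mod_mult_right_eq)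

lemma twist_equiv_mult:
  fixes r s :: int
  assumes "coprime r s"
  shows "twist_equiv (r * s) p q \<longleftrightarrow> twist_equiv r p q \<and> twist_equiv s p q"
proof -
  obtain a b a' b' where pq: "p = (a, b)" "q = (a', b')" by force
  have "twist_equiv (r * s) (a, b) (a', b')"
    if "coprime u1 r" "[u1 ^ 4 * a' = a] (mod r)" "[u1 ^ 6 * b' = b] (mod r)"
      and "coprime u2 s" "[u2 ^ 4 * a' = a] (mod s)" "[u2 ^ 6 * b' = b] (mod s)" for u1 u2
  proof -
    obtain u where u: "[u = u1] (mod r)" "[u = u2] (mod s)"
      using binary_chinese_remainder_int assms by blast
    have "coprime u r" "coprime u s"
      using u that(1,4) cong_imp_coprime cong_sym by blast+
    moreover have "[u ^ 4 * a' = a] (mod r)" "[u ^ 6 * b' = b] (mod r)"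
      "[u ^ 4 * a' = a] (mod s)" "[u ^ 6 * b' = b] (mod s)"
      using that cong_pow_mult_iff[OF u(1)] cong_pow_mult_iff[OF u(2)] by blast+
    ultimately show ?thesis
      using assms by (auto intro!: exI[of _ u] coprime_cong_mult)
  qed
  moreover have "[x = y] (mod r)" "[x = y] (mod s)" if "[x = y] (mod r * s)" for x y
    using that cong_modulus_mult mult.commute by metis+
  ultimately show ?thesis by (auto simp: pq)
qed

lemma curve_iso_mult_iff:
  assumes rs: "coprime r s" "r > 0" "s > 0"
    and pq: "p \<in> nonsing_curves (r * s)" "q \<in> nonsing_curves (r * s)"
  shows "(p, q) \<in> curve_iso (r * s) \<longleftrightarrow>
           (reduce_curve r p, reduce_curve r q) \<in> curve_iso r \<and>
           (reduce_curve s p, reduce_curve s q) \<in> curve_iso s"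
proof -
  have reduced: "reduce_curve r p \<in> nonsing_curves r" "reduce_curve r q \<in> nonsing_curves r"
    "reduce_curve s p \<in> nonsing_curves s" "reduce_curve s q \<in> nonsing_curves s"
    using reduce_curve_bij_betw[OF rs] pq by (auto dest: bij_betw_apply)
  have "(p, q) \<in> curve_iso (r * s) \<longleftrightarrow> twist_equiv (int r * int s) p q"
    using rs pq by (simp add: curve_iso_iff_twist_equiv)
  also have "\<dots> \<longleftrightarrow> twist_equiv (int r) p q \<and> twist_equiv (int s) p q"
    using rs(1) by (simp add: twist_equiv_mult del: twist_equiv.simps)
  also have "\<dots> \<longleftrightarrow> twist_equiv (int r) (reduce_curve r p) (reduce_curve r q) \<and>
                     twist_equiv (int s) (reduce_curve s p) (reduce_curve s q)"
    by (cases p, cases q) (simp only: reduce_curve_def map_prod_simp twist_equiv_mod)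
  also have "\<dots> \<longleftrightarrow> (reduce_curve r p, reduce_curve r q) \<in> curve_iso r \<and>
                     (reduce_curve s p, reduce_curve s q) \<in> curve_iso s"
    using rs reduced by (simp add: curve_iso_iff_twist_equiv del: twist_equiv.simps)
  finally show ?thesis .
qed

lemma curve_iso_refl:
  assumes "m > 0" "p \<in> nonsing_curves m"
  shows "(p, p) \<in> curve_iso m"
  using assms by (cases p) (auto simp: curve_iso_iff_twist_equiv intro: exI[of _ 1])

lemma curve_iso_subset: "curve_iso m \<subseteq> nonsing_curves m \<times> nonsing_curves m"
  unfolding curve_iso_def by auto

lemma C_R_mult:
  assumes rs: "coprime r s" "r > 0" "s > 0"
  shows "C_R (r * s) = C_R r * C_R s"
proof -
  let ?R = "{((p, q), (p', q')). (p, p') \<in> curve_iso r \<and> (q, q') \<in> curve_iso s}"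
  have "?R \<subseteq> (nonsing_curves r \<times> nonsing_curves s) \<times> (nonsing_curves r \<times> nonsing_curves s)"
    using curve_iso_subset[of r] curve_iso_subset[of s] by auto
  then have "C_R (r * s) = card ((nonsing_curves r \<times> nonsing_curves s) // ?R)"
    unfolding C_R_def
    by (rule card_quotient_bij_betw[OF reduce_curve_bij_betw[OF rs] curve_iso_subset])
      (simp add: curve_iso_mult_iff[OF rs])
  also have "\<dots> = C_R r * C_R s"
    unfolding C_R_def using rs
    by (intro card_quotient_Times curve_iso_subset curve_iso_refl)
  finally show ?thesis .
qed

lemma C_R_1: "C_R 1 = 1"
proof -
  have "nonsing_curves 1 = {(0, 0)}" by (auto simp: nonsing_curves_def)
  then show ?thesis unfolding C_R_def by (simp only: singleton_quotient) simp
qed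

lemma C_R_prod_primes:
  assumes "finite P" "\<forall>p \<in> P. prime p"
  shows "C_R (\<Prod>P) = (\<Prod>p \<in> P. C_R p)"
  using assms
proof (induction P rule: finite_induct)
  case empty
  show ?case by (simp only: prod.empty C_R_1)
next
  case (insert p P)
  then have "coprime p (\<Prod>P)"
    by (intro prod_coprime_right primes_coprime) auto
  moreover have "\<Prod>P > 0" "p > 0"
    using insert by (auto intro: prod_pos prime_gt_0_nat)
  ultimately show ?case using insert by (simp add: C_R_mult)
qed

theorem theorem10:
  fixes n :: nat and P :: "nat set"
  assumes "finite P"
    and "\<forall>p \<in> P. prime p"
    and "n = (\<Prod>p \<in> P. p)"
    and "odd n"
    and "n > 1" and "\<not> prime n"
  shows "C_R n = (\<Prod>p \<in> P. C_R p)"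
  using assms(1-3) by (simp add: C_R_prod_primes)

end
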